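(* Fix $\widehat\Sigma\subseteq\Sigma$ and a deck $\beta_1,\ldots,\beta_B\in\mathscr{B}$. Let $\sigma\in\Sigma$ satisfy $T^\sigma(\beta_1,\ldots,\beta_B)=T^*(\beta_1,\ldots,\beta_B)$. Let $\mathscr{K}^\sigma_1,\ldots,\mathscr{K}^\sigma_{K^\sigma}$ be the connected components of the graph $\mathscr{G}^\sigma$. For each $k\in\{1,\ldots,K^\sigma\}$ define $\sigma_k:\mathcal{N}\to\mathcal{N}$ by $\sigma_k(i)=\sigma(i)$ if $i\in\mathcal{N}_c$ with $c\in\mathscr{K}^\sigma_k$, and $\sigma_k(i)=i$ otherwise. Then each $\sigma_k$ belongs to $\Sigma$ and satisfies $T^{\sigma_k}(\beta_1,\ldots,\beta_B)=T^*(\beta_1,\ldots,\beta_B)$, and $\bigcup_{k=1}^{K^\sigma}\mathscr{F}(\widehat\Sigma\cup\{\sigma_k\})=\mathscr{F}(\widehat\Sigma\cup\{\sigma\})$.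
   Context: A ballot style consists of contests $\mathcal{C}=\{1,\ldots,C\}$, candidates $\mathcal{N}=\{1,\ldots,N\}$ partitioned into nonempty sets $\mathcal{N}_c$ ($c\in\mathcal{C}$), and positive integers $v_c$. A filled-out ballot is a subset $\beta\subseteq\mathcal{N}$; $\mathscr{B}=\{\beta\subseteq\mathcal{N}: |\mathcal{N}_c\cap\beta|\le v_c\ \forall c\}$. For $i\in\mathcal{N}_c$: $T^*_i(\beta_1,\ldots,\beta_B)=\sum_{b=1}^B\mathbb{I}\{i\in\beta_b\text{ and }|\mathcal{N}_c\cap\beta_b|\le v_c\}$, and for a bijection $\sigma$ of $\mathcal{N}$, $T^\sigma_i(\beta_1,\ldots,\beta_B)=\sum_{b=1}^B\mathbb{I}\{\sigma(i)\in\beta_b\text{ and }|\{\sigma(j)\in\beta_b: j\in\mathcal{N}_c\}|\le v_c\}$. $\Sigma$ is the set of non-identity bijections $\mathcal{N}\to\mathcal{N}$. For $\widehat\Sigma\subseteq\Sigma$, $\mathscr{F}(\widehat\Sigma)$ is the set of all tuples $(\beta_1,\ldots,\beta_{B'})$, over all $B'\in\mathbb{N}$, with each $\beta_b\in\mathscr{B}$ and $T^{\tau}(\beta_1,\ldots,\beta_{B'})\neq T^*(\beta_1,\ldots,\beta_{B'})$ for all $\tau\in\widehat\Sigma$. For $\sigma\in\Sigma$, $\mathscr{G}^\sigma=(\mathscr{V}^\sigma,\mathscr{E}^\sigma)$ is the undirected graph with vertex set $\mathscr{V}^\sigma=\{c\in\mathcal{C}:\exists i\in\mathcal{N}_c,\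 \sigma(i)\neq i\}$ and edge set $\mathscr{E}^\sigma=\{(c,c'): \exists i\in\mathcal{N}_c, i'\in\mathcal{N}_{c'}\text{ with }\sigma(i)=i'\text{ or }\sigma(i')=i\}$. *)

theory Defs
  imports Main
begin

text \<open>Ballot style: candidates N (type 'a), contests C (type 'c); the partition of N
into the sets N_c is given by the contest-map con (N_c = {i \<in> N. con i = c});
v c is the number of votes allowed in contest c.\<close>

definition cands :: "'a set \<Rightarrow> ('a \<Rightarrow> 'c) \<Rightarrow> 'c \<Rightarrow> 'a set" where
  "cands N con c = {i \<in> N. con i = c}"

definition ballots :: "'a set \<Rightarrow> 'c set \<Rightarrow> ('a \<Rightarrow> 'c) \<Rightarrow> ('c \<Rightarrow> nat) \<Rightarrow> 'a set set" where
  "ballots N C con v = {\<beta>. \<beta> \<subseteq> N \<and> (\<forall>c\<in>C. card (cands N con c \<inter> \<beta>) \<le> v c)}"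

definition Tstar :: "'a set \<Rightarrow> ('a \<Rightarrow> 'c) \<Rightarrow> ('c \<Rightarrow> nat) \<Rightarrow> 'a set list \<Rightarrow> 'a \<Rightarrow> nat" where
  "Tstar N con v deck = (\<lambda>i. if i \<in> N then
     sum_list (map (\<lambda>b. if i \<in> b \<and> card (cands N con (con i) \<inter> b) \<le> v (con i) then 1 else 0) deck)
     else 0)"

definition Tsig :: "'a set \<Rightarrow> ('a \<Rightarrow> 'c) \<Rightarrow> ('c \<Rightarrow> nat) \<Rightarrow> ('a \<Rightarrow> 'a) \<Rightarrow> 'a set list \<Rightarrow> 'a \<Rightarrow> nat" where
  "Tsig N con v \<sigma> deck = (\<lambda>i. if i \<in> N then
     sum_list (map (\<lambda>b. if \<sigma> i \<in> b \<and> card {\<sigma> j | j. j \<in> cands N con (con i) \<and> \<sigma> j \<in> b} \<le> v (con i) then 1 else 0) deck)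
     else 0)"

text \<open>Sigma: non-identity bijections of N (represented as functions that are the
identity outside N, so that each bijection of N has a unique representative).\<close>
definition Perms :: "'a set \<Rightarrow> ('a \<Rightarrow> 'a) set" where
  "Perms N = {\<sigma>. bij_betw \<sigma> N N \<and> (\<forall>i. i \<notin> N \<longrightarrow> \<sigma> i = i) \<and> (\<exists>i\<in>N. \<sigma> i \<noteq> i)}"

definition Fam :: "'a set \<Rightarrow> 'c set \<Rightarrow> ('a \<Rightarrow> 'c) \<Rightarrow> ('c \<Rightarrow> nat) \<Rightarrow> ('a \<Rightarrow> 'a) set \<Rightarrow> 'a set list set" where
  "Fam N C con v S = {deck. set deck \<subseteq> ballots N C con v \<and>
      (\<forall>\<tau>\<in>S. Tsig N con v \<tau> deck \<noteq> Tstar N con v deck)}"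

definition gverts :: "'a set \<Rightarrow> 'c set \<Rightarrow> ('a \<Rightarrow> 'c) \<Rightarrow> ('a \<Rightarrow> 'a) \<Rightarrow> 'c set" where
  "gverts N C con \<sigma> = {c \<in> C. \<exists>i\<in>cands N con c. \<sigma> i \<noteq> i}"

definition gedges :: "'a set \<Rightarrow> 'c set \<Rightarrow> ('a \<Rightarrow> 'c) \<Rightarrow> ('a \<Rightarrow> 'a) \<Rightarrow> ('c \<times> 'c) set" where
  "gedges N C con \<sigma> = {(c, c'). c \<in> C \<and> c' \<in> C \<and>
      (\<exists>i\<in>cands N con c. \<exists>i'\<in>cands N con c'. \<sigma> i = i' \<or> \<sigma> i' = i)}"

definition gcomps :: "'a set \<Rightarrow> 'c set \<Rightarrow> ('a \<Rightarrow> 'c) \<Rightarrow> ('a \<Rightarrow> 'a) \<Rightarrow> 'c set set" where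
  "gcomps N C con \<sigma> =
     (let V = gverts N C con \<sigma>;
          E = gedges N C con \<sigma> \<inter> (V \<times> V)
      in V // ((E \<union> E\<inverse>)\<^sup>* \<inter> (V \<times> V)))"

definition restr_perm :: "'a set \<Rightarrow> ('a \<Rightarrow> 'c) \<Rightarrow> ('a \<Rightarrow> 'a) \<Rightarrow> 'c set \<Rightarrow> 'a \<Rightarrow> 'a" where
  "restr_perm N con \<sigma> K = (\<lambda>i. if i \<in> N \<and> con i \<in> K then \<sigma> i else i)"

end

theory Submission
  imports Defs
begin

text \<open>The tally of candidate i under a relabelling depends only on the relabelling of the
candidates of i's own contest. Hence on every contest of a component K the relabelling
restr_perm N con \<sigma> K tallies like \<sigma>, and on every other contest like the identity.
Since the contests moved by \<sigma> are exactly the vertices of the graph, which are covered by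
the components, \<sigma> leaves the tally unchanged iff every restriction does; the identity of
the families of decks is a reformulation of this equivalence. That each restriction is
again a permutation uses that components are closed under \<sigma>: i and \<sigma> i lie in
adjacent contests.\<close>

lemma Tsig_cong_cands:
  assumes "\<forall>j\<in>cands N con (con i). f j = g j"
  shows "Tsig N con v f deck i = Tsig N con v g deck i"
proof (cases "i \<in> N")
  case True
  have "f i = g i" using assms True by (simp add: cands_def)
  moreover have "\<And>b. {f j |j. j \<in> cands N con (con i) \<and> f j \<in> b}
                    = {g j |j. j \<in> cands N con (con i) \<and> g j \<in> b}"
    using assms by (auto; metis)
  ultimately show ?thesis using True unfolding Tsig_def by simp
qed (simp add: Tsig_def)

lemma Tsig_eq_Tstar_if_fixes_cands:
  assumes "\<forall>j\<in>cands N con (con i). f j = j"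
  shows "Tsig N con v f deck i = Tstar N con v deck i"
proof (cases "i \<in> N")
  case True
  have "f i = i" using assms True by (simp add: cands_def)
  moreover have "\<And>b. {f j |j. j \<in> cands N con (con i) \<and> f j \<in> b} = cands N con (con i) \<inter> b"
  proof (intro equalityI subsetI)
    fix b x assume "x \<in> cands N con (con i) \<inter> b"
    then show "x \<in> {f j |j. j \<in> cands N con (con i) \<and> f j \<in> b}" using assms by force
  qed (use assms in auto)
  ultimately show ?thesis using True unfolding Tsig_def Tstar_def by simp
qed (simp add: Tsig_def Tstar_def)

lemma gcomps_subset_gverts: "K \<in> gcomps N C con \<sigma> \<Longrightarrow> K \<subseteq> gverts N C con \<sigma>"
  unfolding gcomps_def Let_def by (auto elim: quotientE)

lemma gverts_covered_by_gcomps: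
  assumes "c \<in> gverts N C con \<sigma>"
  shows "\<exists>K\<in>gcomps N C con \<sigma>. c \<in> K"
  using assms unfolding gcomps_def Let_def quotient_def by auto

lemma gcomps_nonempty: "K \<in> gcomps N C con \<sigma> \<Longrightarrow> K \<noteq> {}"
  unfolding gcomps_def Let_def by (auto elim!: quotientE)

lemma gcomps_closed_gedges:
  assumes "K \<in> gcomps N C con \<sigma>" and "c \<in> K" and "(c, c') \<in> gedges N C con \<sigma>"
    and "c' \<in> gverts N C con \<sigma>"
  shows "c' \<in> K"
proof -
  define V where "V = gverts N C con \<sigma>"
  define E where "E = gedges N C con \<sigma> \<inter> (V \<times> V)"
  obtain c0 where c0: "c0 \<in> V" and K: "K = ((E \<union> E\<inverse>)\<^sup>* \<inter> (V \<times> V)) `` {c0}"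
    using assms(1) unfolding gcomps_def Let_def V_def E_def by (auto elim: quotientE)
  have "(c0, c) \<in> (E \<union> E\<inverse>)\<^sup>*" and "c \<in> V" using assms(2) K by auto
  moreover have "(c, c') \<in> E" using assms(3,4) \<open>c \<in> V\<close> unfolding E_def V_def by auto
  ultimately have "(c0, c') \<in> (E \<union> E\<inverse>)\<^sup>*" by (meson UnI1 rtrancl.rtrancl_into_rtrancl)
  then show ?thesis using K c0 assms(4) unfolding V_def by auto
qed

lemma gcomps_closed_perm:
  assumes "inj_on \<sigma> N" and "\<sigma> ` N \<subseteq> N" and "con ` N \<subseteq> C"
    and "K \<in> gcomps N C con \<sigma>" and "i \<in> N" and "con i \<in> K"
  shows "con (\<sigma> i) \<in> K"
proof (cases "\<sigma> i = i")
  case True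
  then show ?thesis using assms(6) by simp
next
  case False
  have si: "\<sigma> i \<in> N" using assms(2,5) by blast
  have "\<sigma> (\<sigma> i) \<noteq> \<sigma> i"
    using False inj_onD[OF assms(1) _ si assms(5)] by blast
  then have "con (\<sigma> i) \<in> gverts N C con \<sigma>"
    using si assms(3) unfolding gverts_def cands_def by blast
  moreover have "(con i, con (\<sigma> i)) \<in> gedges N C con \<sigma>"
    using assms(3,5) si unfolding gedges_def cands_def by blast
  ultimately show ?thesis using gcomps_closed_gedges[OF assms(4,6)] by blast
qed

lemma restr_perm_in_Perms:
  assumes "finite N" and "con ` N \<subseteq> C" and "\<sigma> \<in> Perms N" and K: "K \<in> gcomps N C con \<sigma>"
  shows "restr_perm N con \<sigma> K \<in> Perms N"
proof -
  let ?f = "restr_perm N con \<sigma> K"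
  have inj\<sigma>: "inj_on \<sigma> N" and into\<sigma>: "\<sigma> ` N \<subseteq> N"
    using assms(3) unfolding Perms_def bij_betw_def by auto
  note closed = gcomps_closed_perm[OF inj\<sigma> into\<sigma> assms(2) K]
  have into: "?f ` N \<subseteq> N" using into\<sigma> unfolding restr_perm_def by auto
  have inj: "inj_on ?f N"
  proof (rule inj_onI)
    fix x y assume "x \<in> N" "y \<in> N" "?f x = ?f y"
    then show "x = y"
      using closed[of x] closed[of y] inj\<sigma> unfolding restr_perm_def
      by (auto split: if_splits dest: inj_onD)
  qed
  have "bij_betw ?f N N"
    using endo_inj_surj[OF assms(1) into inj] inj unfolding bij_betw_def by blast
  moreover obtain c where "c \<in> K" using gcomps_nonempty[OF K] by blast
  then obtain i where "i \<in> N" "con i \<in> K" "\<sigma> i \<noteq> i"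
    using gcomps_subset_gverts[OF K] unfolding gverts_def cands_def by auto
  ultimately show ?thesis unfolding Perms_def restr_perm_def by auto
qed

lemma Tsig_eq_Tstar_iff_restr_perm:
  assumes "con ` N \<subseteq> C"
  shows "Tsig N con v \<sigma> d = Tstar N con v d \<longleftrightarrow>
     (\<forall>K\<in>gcomps N C con \<sigma>. Tsig N con v (restr_perm N con \<sigma> K) d = Tstar N con v d)"
proof -
  have in_comp: "Tsig N con v (restr_perm N con \<sigma> K) d i = Tsig N con v \<sigma> d i"
    if "con i \<in> K" for K i
    using that by (intro Tsig_cong_cands) (auto simp: cands_def restr_perm_def)
  have off_comp: "Tsig N con v (restr_perm N con \<sigma> K) d i = Tstar N con v d i"
    if "con i \<notin> K" for K i
    using that by (intro Tsig_eq_Tstar_if_fixes_cands) (auto simp: cands_def restr_perm_def)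
  have off_comps: "Tsig N con v \<sigma> d i = Tstar N con v d i"
    if "\<forall>K\<in>gcomps N C con \<sigma>. con i \<notin> K" for i
  proof (cases "i \<in> N")
    case True
    then have "con i \<in> C" using assms by blast
    moreover have "con i \<notin> gverts N C con \<sigma>"
      using that gverts_covered_by_gcomps[of "con i" N C con \<sigma>] by blast
    ultimately show ?thesis
      by (intro Tsig_eq_Tstar_if_fixes_cands) (auto simp: gverts_def cands_def)
  qed (simp add: Tsig_def Tstar_def)
  show ?thesis
  proof
    assume eq: "Tsig N con v \<sigma> d = Tstar N con v d"
    show "\<forall>K\<in>gcomps N C con \<sigma>. Tsig N con v (restr_perm N con \<sigma> K) d = Tstar N con v d"
    proof (intro ballI ext)
      fix K i
      show "Tsig N con v (restr_perm N con \<sigma> K) d i = Tstar N con v d i"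
        using in_comp[of i K] off_comp[of i K] eq by (cases "con i \<in> K") auto
    qed
  next
    assume eqs: "\<forall>K\<in>gcomps N C con \<sigma>. Tsig N con v (restr_perm N con \<sigma> K) d = Tstar N con v d"
    show "Tsig N con v \<sigma> d = Tstar N con v d"
    proof (rule ext)
      fix i
      show "Tsig N con v \<sigma> d i = Tstar N con v d i"
      proof (cases "\<exists>K\<in>gcomps N C con \<sigma>. con i \<in> K")
        case True
        then obtain K where "K \<in> gcomps N C con \<sigma>" "con i \<in> K" by blast
        then show ?thesis using eqs in_comp[of i K] by simp
      qed (simp add: off_comps)
    qed
  qed
qed

lemma Fam_UN_restr_perm:
  assumes "con ` N \<subseteq> C"
  shows "(\<Union>K\<in>gcomps N C con \<sigma>. Fam N C con v (S \<union> {restr_perm N con \<sigma> K}))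
       = Fam N C con v (S \<union> {\<sigma>})"
proof -
  have "Tsig N con v \<sigma> d \<noteq> Tstar N con v d \<longleftrightarrow>
      (\<exists>K\<in>gcomps N C con \<sigma>. Tsig N con v (restr_perm N con \<sigma> K) d \<noteq> Tstar N con v d)" for d
    using Tsig_eq_Tstar_iff_restr_perm[OF assms, of v \<sigma> d] by simp
  then show ?thesis unfolding Fam_def by auto
qed

theorem theorem2:
  fixes N :: "'a set" and C :: "'c set" and con :: "'a \<Rightarrow> 'c" and v :: "'c \<Rightarrow> nat"
    and Shat :: "('a \<Rightarrow> 'a) set" and deck :: "'a set list" and \<sigma> :: "'a \<Rightarrow> 'a"
  assumes "finite N" and "finite C"
    and "con ` N \<subseteq> C"
    and "\<forall>c\<in>C. cands N con c \<noteq> {}"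
    and "\<forall>c\<in>C. v c > 0"
    and "Shat \<subseteq> Perms N"
    and "set deck \<subseteq> ballots N C con v"
    and "\<sigma> \<in> Perms N"
    and "Tsig N con v \<sigma> deck = Tstar N con v deck"
  shows "(\<forall>K\<in>gcomps N C con \<sigma>.
            restr_perm N con \<sigma> K \<in> Perms N \<and>
            Tsig N con v (restr_perm N con \<sigma> K) deck = Tstar N con v deck)
       \<and> (\<Union>K\<in>gcomps N C con \<sigma>. Fam N C con v (Shat \<union> {restr_perm N con \<sigma> K}))
           = Fam N C con v (Shat \<union> {\<sigma>})"
  using restr_perm_in_Perms[OF assms(1,3,8)]
    Tsig_eq_Tstar_iff_restr_perm[OF assms(3)] assms(9)
    Fam_UN_restr_perm[OF assms(3)]
  by blast

end
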